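(* Let $Y^*\in\mathcal L^1(\mathcal Q)$ and let the range $\{\mu_{\mathcal Q}(A)\mid A\in\mathcal F\}$ be relatively compact in $(l^\infty(\mathcal Q),\|\cdot\|_\infty)$. If $\rho_{\mathcal Q}(Y^*\mathbb 1_{\{Y^*>a\}})\to0$ as $a\to\infty$, then $\rho_{\mathcal Q}$ is continuous from above at $0$.
   Context: Let $(\Omega,\mathcal F,\mathrm P)$ be a probability space (equipped with a filtration $(\mathcal F_t)_{0\le t\le T}$, $\mathcal F=\mathcal F_T$). $\mathcal Q$ is a nonempty set of probability measures on $\mathcal F$, each absolutely continuous w.r.t. $\mathrm P$. $\mathcal L^1(\mathcal Q)$ is the set of random variables $X$ with $\sup_{\mathrm Q\in\mathcal Q}\mathbb E_{\mathrm Q}[|X|]<\infty$. $Y=(Y_t)_{0\le t\le T}$ is a right-continuous adapted process with bounded paths and $Y^*:=\sup_{t\in[0,T]}|Y_t|$. $\mathcal X$ is the set of random variables $X$ with $|X|\le C(Y^*+1)$ $\mathrm P$-a.s. for some $C>0$; $\rho_{\mathcal Q}(X)=\sup_{\mathrm Q\in\mathcal Q}\mathbb E_{\mathrm Q}[X]$ for $X\in\mathcal X$; $\rho_{\mathcal Q}$ is continuous from above at $0$ if $\rho_{\mathcal Q}(X_n)\searrow0$ whenever $X_n\in\mathcal X$, $X_n\searrow0$ $\mathrm P$-a.s. $l^\infty(\mathcal Q)$ is the space of bounded real functions on $\mathcal Q$ with sup-norm, and $\mu_{\mathcal Q}(A)(\mathrm Q)=\mathrm Q(A)$ for $A\in\mathcal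 F$. *)

theory Defs
  imports "HOL-Probability.Probability"
begin

definition Ystar :: "real \<Rightarrow> (real \<Rightarrow> 'a \<Rightarrow> real) \<Rightarrow> 'a \<Rightarrow> real" where
  "Ystar T Y \<omega> = (SUP t\<in>{0..T}. \<bar>Y t \<omega>\<bar>)"

definition L1Q :: "'a measure \<Rightarrow> 'a measure set \<Rightarrow> ('a \<Rightarrow> real) set" where
  "L1Q M Qs = {X. X \<in> borel_measurable M \<and>
                 (SUP Q\<in>Qs. \<integral>\<^sup>+ \<omega>. ennreal \<bar>X \<omega>\<bar> \<partial>Q) < \<infinity>}"

definition calX :: "'a measure \<Rightarrow> ('a \<Rightarrow> real) \<Rightarrow> ('a \<Rightarrow> real) set" where
  "calX M Ys = {X. X \<in> borel_measurable M \<and>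
                  (\<exists>C>0. AE \<omega> in M. \<bar>X \<omega>\<bar> \<le> C * (Ys \<omega> + 1))}"

definition rhoQ :: "'a measure set \<Rightarrow> ('a \<Rightarrow> real) \<Rightarrow> real" where
  "rhoQ Qs X = (SUP Q\<in>Qs. integral\<^sup>L Q X)"

definition cont_from_above_at_0 :: "'a measure \<Rightarrow> ('a \<Rightarrow> real) \<Rightarrow> 'a measure set \<Rightarrow> bool" where
  "cont_from_above_at_0 M Ys Qs \<longleftrightarrow>
     (\<forall>Xs :: nat \<Rightarrow> 'a \<Rightarrow> real.
        (\<forall>n. Xs n \<in> calX M Ys) \<and>
        (AE \<omega> in M. decseq (\<lambda>n. Xs n \<omega>) \<and> (\<lambda>n. Xs n \<omega>) \<longlonglongrightarrow> 0)
        \<longrightarrow> decseq (\<lambda>n. rhoQ Qs (Xs n)) \<and> (\<lambda>n. rhoQ Qs (Xs n)) \<longlonglongrightarrow> 0)"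

text \<open>l^infinity(Q) with the sup-norm: bounded real functions on Qs
  (extensional on Qs), with the uniform metric.\<close>
definition linfty :: "'a measure set \<Rightarrow> ('a measure \<Rightarrow> real) metric" where
  "linfty Qs = funspace Qs euclidean_metric"

definition muQ :: "'a measure set \<Rightarrow> 'a set \<Rightarrow> 'a measure \<Rightarrow> real" where
  "muQ Qs A = restrict (\<lambda>Q. measure Q A) Qs"

definition relatively_compact_in :: "'b metric \<Rightarrow> 'b set \<Rightarrow> bool" where
  "relatively_compact_in m S \<longleftrightarrow>
     S \<subseteq> mspace m \<and> compactin (mtopology_of m) (mtopology_of m closure_of S)"

end

theory Submission
  imports Defs
begin

text \<open>
  Let \<open>X\<^sub>n\<close> decrease to \<open>0\<close> almost surely with \<open>X\<^sub>0 \<le> C (Y\<^sup>* + 1)\<close>.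
  For levels \<open>\<epsilon> > 0\<close> and \<open>a \<ge> 1\<close> one has pointwise
  \<open>X\<^sub>n \<le> \<epsilon> + C (a + 1) 1\<^bsub>B\<^sub>n\<^esub> + 2 C Y\<^sup>* 1\<^bsub>{Y\<^sup>* > a}\<^esub>\<close>, where
  \<open>B\<^sub>n\<close> is the event that \<open>X\<^sub>m > \<epsilon>\<close> for some \<open>m \<ge> n\<close>. The last term is
  small uniformly in \<open>Q\<close> by the uniform integrability hypothesis. The sets \<open>B\<^sub>n\<close> decrease to a \<open>P\<close>-null set,
  so \<open>Q(B\<^sub>n) \<rightarrow> 0\<close> for every \<open>Q\<close>; relative compactness of the range of
  \<open>\<mu>\<^sub>Q\<close> in \<open>l\<^sup>\<infinity>(Q)\<close> upgrades this to uniform convergence, because every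
  uniform limit point of \<open>\<mu>\<^sub>Q(B\<^sub>n)\<close> must be the pointwise limit \<open>0\<close>.
\<close>

lemma compactin_funspace_pointwise_limit:
  fixes \<sigma> :: "nat \<Rightarrow> 'a \<Rightarrow> 'b"
  assumes K: "compactin (mtopology_of (funspace S m)) K" and \<sigma>: "range \<sigma> \<subseteq> K"
    and lim: "\<And>x. x \<in> S \<Longrightarrow> limitin (mtopology_of m) (\<lambda>k. \<sigma> k x) (g x) sequentially"
    and "e > 0"
  shows "\<exists>k. \<forall>x\<in>S. mdist m (\<sigma> k x) (g x) < e"
proof -
  interpret F: Metric_space "mspace (funspace S m)" "mdist (funspace S m)"
    by (rule Metric_space_mspace_mdist)
  interpret B: Metric_space "mspace m" "mdist m"
    by (rule Metric_space_mspace_mdist)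
  obtain l r where "strict_mono r" and lim_r: "limitin F.mtopology (\<sigma> \<circ> r) l sequentially"
    using K \<sigma> unfolding mtopology_of_def F.compactin_sequentially by blast
  have l: "l \<in> mspace (funspace S m)"
    using F.limitin_mspace[OF lim_r] .
  have \<sigma>F: "\<sigma> k \<in> mspace (funspace S m)" for k
    using \<sigma> compactin_subset_topspace[OF K] by auto
  have close: "\<forall>\<^sub>F j in sequentially. mdist (funspace S m) (\<sigma> (r j)) l < \<epsilon>" if "\<epsilon> > 0" for \<epsilon>
    using lim_r that unfolding F.limitin_metric by (auto elim: eventually_mono)
  have pointwise: "mdist m (\<sigma> k x) (l x) \<le> mdist (funspace S m) (\<sigma> k) l" if "x \<in> S" for k x
    using funspace_mdist_le[OF \<sigma>F l, where a="mdist (funspace S m) (\<sigma> k) l"] that by auto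
  have "l x = g x" if x: "x \<in> S" for x
  proof (rule B.limitin_metric_unique)
    show "limitin B.mtopology (\<lambda>j. \<sigma> (r j) x) (l x) sequentially"
      unfolding B.limitin_metric using funspace_imp_welldefined[OF l x] funspace_imp_welldefined[OF \<sigma>F x]
      by (auto elim!: eventually_mono[OF close] intro: le_less_trans[OF pointwise[OF x]])
    show "limitin B.mtopology (\<lambda>j. \<sigma> (r j) x) (g x) sequentially"
      using limitin_subsequence[OF \<open>strict_mono r\<close> lim[OF x]] by (simp add: o_def mtopology_of_def)
  qed simp
  moreover obtain j where "mdist (funspace S m) (\<sigma> (r j)) l < e"
    using eventually_happens'[OF _ close[OF \<open>e > 0\<close>]] by auto
  ultimately show ?thesis
    using pointwise by (metis le_less_trans)
qed

lemma le_split_at_levels: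
  fixes x z C a \<epsilon> b :: real
  assumes "0 \<le> x" "x \<le> C * (z + 1)" "0 \<le> C" "1 \<le> a" "0 \<le> \<epsilon>" "0 \<le> b"
    and "\<epsilon> < x \<Longrightarrow> b = 1"
  shows "x \<le> \<epsilon> + C * (a + 1) * b + 2 * C * (z * indicator {a<..} z)"
proof -
  have tail: "0 \<le> 2 * C * (z * indicator {a<..} z)"
    using assms(3,4) by (simp add: indicator_def)
  have mid: "0 \<le> C * (a + 1) * b"
    using assms(3,4,6) by simp
  show ?thesis
  proof (cases "\<epsilon> < x")
    case False
    with tail mid show ?thesis by linarith
  next
    case True
    show ?thesis
    proof (cases "a < z")
      case True
      then have "C * (z + 1) \<le> C * (2 * z)"
        using assms(3,4) by (intro mult_left_mono) auto
      then have "x \<le> 2 * C * z"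
        using assms(2) by simp
      with True \<open>\<epsilon> < x\<close> assms(5,7) mid show ?thesis
        by (simp add: indicator_def)
    next
      case False
      then have "C * (z + 1) \<le> C * (a + 1)"
        using assms(3) by (intro mult_left_mono) auto
      moreover have "b = 1"
        using \<open>\<epsilon> < x\<close> by (rule assms(7))
      ultimately show ?thesis
        using assms(2,5) tail by simp
    qed
  qed
qed

lemma AE_le_split_at_levels:
  fixes X :: "nat \<Rightarrow> 'a \<Rightarrow> real"
  assumes lim: "AE \<omega> in M. decseq (\<lambda>n. X n \<omega>) \<and> (\<lambda>n. X n \<omega>) \<longlonglongrightarrow> 0"
    and bound: "AE \<omega> in M. \<bar>X 0 \<omega>\<bar> \<le> C * (Z \<omega> + 1)" and "0 \<le> C" "1 \<le> a" "0 \<le> \<epsilon>"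
  shows "AE \<omega> in M. X n \<omega> \<le> \<epsilon> + C * (a + 1) * indicator (\<Union>m\<in>{n..}. {\<omega>\<in>space M. \<epsilon> < X m \<omega>}) \<omega>
                        + 2 * C * (Z \<omega> * indicator {\<omega>. a < Z \<omega>} \<omega>)"
  using lim bound AE_space
proof eventually_elim
  case (elim \<omega>)
  then have "0 \<le> X n \<omega>" "X n \<omega> \<le> X 0 \<omega>"
    using decseq_ge[of "\<lambda>n. X n \<omega>"] decseqD[of "\<lambda>n. X n \<omega>"] by auto
  with elim have "X n \<omega> \<le> C * (Z \<omega> + 1)" by linarith
  then have "X n \<omega> \<le> \<epsilon> + C * (a + 1) * indicator (\<Union>m\<in>{n..}. {\<omega>\<in>space M. \<epsilon> < X m \<omega>}) \<omega>
                   + 2 * C * (Z \<omega> * indicator {a<..} (Z \<omega>))"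
    using \<open>0 \<le> X n \<omega>\<close> \<open>0 \<le> C\<close> \<open>1 \<le> a\<close> \<open>0 \<le> \<epsilon>\<close> \<open>\<omega> \<in> space M\<close>
    by (intro le_split_at_levels) (auto simp: indicator_def)
  moreover have "indicator {a<..} (Z \<omega>) = (indicator {\<omega>. a < Z \<omega>} \<omega> :: real)"
    by (simp split: split_indicator)
  ultimately show ?case
    by simp
qed

lemma limsup_exceedances_null:
  fixes X :: "nat \<Rightarrow> 'a \<Rightarrow> real"
  assumes "\<And>n. X n \<in> borel_measurable M" "AE \<omega> in M. (\<lambda>n. X n \<omega>) \<longlonglongrightarrow> 0" "0 < \<epsilon>"
  shows "(\<Inter>n. (\<Union>m\<in>{n..}. {\<omega>\<in>space M. \<epsilon> < X m \<omega>})) \<in> null_sets M"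
proof -
  have "(\<Union>m\<in>{n..}. {\<omega>\<in>space M. \<epsilon> < X m \<omega>}) \<in> sets M" for n
    using assms(1) by (intro sets.countable_UN'') measurable
  then have "(\<Inter>n. (\<Union>m\<in>{n..}. {\<omega>\<in>space M. \<epsilon> < X m \<omega>})) \<in> sets M"
    by (intro sets.countable_INT) blast+
  moreover have "AE \<omega> in M. \<omega> \<notin> (\<Inter>n. (\<Union>m\<in>{n..}. {\<omega>\<in>space M. \<epsilon> < X m \<omega>}))"
    using assms(2)
  proof eventually_elim
    case (elim \<omega>)
    then obtain n where "\<forall>m\<ge>n. norm (X m \<omega> - 0) < \<epsilon>"
      using LIMSEQ_D \<open>0 < \<epsilon>\<close> by blast
    then show ?case by fastforce
  qed
  ultimately show ?thesis
    by (simp add: AE_iff_null_sets)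
qed

locale abs_cont_prob_family =
  fixes M :: "'a measure" and Qs :: "'a measure set"
  assumes nonempty: "Qs \<noteq> {}"
    and prob_space: "\<And>Q. Q \<in> Qs \<Longrightarrow> prob_space Q"
    and sets_eq: "\<And>Q. Q \<in> Qs \<Longrightarrow> sets Q = sets M"
    and abs_cont: "\<And>Q. Q \<in> Qs \<Longrightarrow> absolutely_continuous M Q"
begin

lemma AE_family: "AE x in M. P x \<Longrightarrow> Q \<in> Qs \<Longrightarrow> AE x in Q. P x"
  using absolutely_continuous_AE[OF sets_eq abs_cont] by blast

lemma measurable_family: "X \<in> borel_measurable M \<Longrightarrow> Q \<in> Qs \<Longrightarrow> X \<in> borel_measurable Q"
  using measurable_cong_sets[OF sets_eq refl] by blast

lemma measure_decseq_uniformly_small: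
  assumes rel_compact: "relatively_compact_in (linfty Qs) {muQ Qs A | A. A \<in> sets M}"
    and A: "range A \<subseteq> sets M" "decseq A" "(\<Inter>k. A k) \<in> null_sets M" and "e > 0"
  shows "\<exists>k. \<forall>Q\<in>Qs. measure Q (A k) < e"
proof -
  let ?K = "mtopology_of (linfty Qs) closure_of {muQ Qs A | A. A \<in> sets M}"
  have "{muQ Qs A | A. A \<in> sets M} \<subseteq> ?K"
    using rel_compact by (intro closure_of_subset) (simp add: relatively_compact_in_def)
  then have "range (\<lambda>k. muQ Qs (A k)) \<subseteq> ?K"
    using A(1) by blast
  moreover have "(\<lambda>k. measure Q (A k)) \<longlonglongrightarrow> 0" if Q: "Q \<in> Qs" for Q
  proof -
    interpret Q: prob_space Q using prob_space[OF Q] .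
    have "(\<lambda>k. measure Q (A k)) \<longlonglongrightarrow> measure Q (\<Inter>k. A k)"
      using A sets_eq[OF Q] by (intro Q.finite_Lim_measure_decseq) auto
    moreover have "(\<Inter>k. A k) \<in> null_sets Q"
      using A(3) abs_cont[OF Q] by (auto simp: absolutely_continuous_def)
    ultimately show ?thesis
      by (simp add: measure_def null_setsD1)
  qed
  moreover have "compactin (mtopology_of (funspace Qs euclidean_metric)) ?K"
    using rel_compact by (simp add: relatively_compact_in_def linfty_def)
  ultimately obtain k where "\<forall>Q\<in>Qs. dist (muQ Qs (A k) Q) 0 < e"
    using compactin_funspace_pointwise_limit[of Qs euclidean_metric ?K "\<lambda>k. muQ Qs (A k)" "\<lambda>_. 0" e]
      \<open>e > 0\<close> by (auto simp: linfty_def muQ_def)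
  then show ?thesis
    by (auto simp: muQ_def)
qed

lemma L1Q_dominated:
  assumes X: "X \<in> borel_measurable M" and Z: "Z \<in> L1Q M Qs" and "0 \<le> C"
    and bound: "AE \<omega> in M. \<bar>X \<omega>\<bar> \<le> C * (\<bar>Z \<omega>\<bar> + 1)"
  shows "X \<in> L1Q M Qs"
proof -
  define B where "B = (SUP Q\<in>Qs. \<integral>\<^sup>+ \<omega>. ennreal \<bar>Z \<omega>\<bar> \<partial>Q)"
  have "B < \<infinity>" using Z by (simp add: L1Q_def B_def)
  have "(\<integral>\<^sup>+ \<omega>. ennreal \<bar>X \<omega>\<bar> \<partial>Q) \<le> ennreal C * (B + 1)" if Q: "Q \<in> Qs" for Q
  proof -
    interpret Q: prob_space Q using prob_space[OF Q] .
    have "(\<integral>\<^sup>+ \<omega>. ennreal \<bar>X \<omega>\<bar> \<partial>Q) \<le> (\<integral>\<^sup>+ \<omega>. ennreal (C * (\<bar>Z \<omega>\<bar> + 1)) \<partial>Q)"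
      using AE_family[OF bound Q] by (intro nn_integral_mono_AE) (auto elim: eventually_mono)
    also have "\<dots> = (\<integral>\<^sup>+ \<omega>. ennreal C * (ennreal \<bar>Z \<omega>\<bar> + 1) \<partial>Q)"
      using \<open>0 \<le> C\<close> by (simp add: ennreal_mult ennreal_plus)
    also have "\<dots> = ennreal C * ((\<integral>\<^sup>+ \<omega>. ennreal \<bar>Z \<omega>\<bar> \<partial>Q) + 1)"
    proof -
      have "Z \<in> borel_measurable Q"
        using measurable_family[OF _ Q] Z by (auto simp: L1Q_def)
      then show ?thesis
        by (simp add: nn_integral_cmult nn_integral_add Q.emeasure_space_1)
    qed
    also have "\<dots> \<le> ennreal C * (B + 1)"
      unfolding B_def using Q by (intro mult_left_mono add_right_mono SUP_upper) auto
    finally show ?thesis .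
  qed
  then have "(SUP Q\<in>Qs. \<integral>\<^sup>+ \<omega>. ennreal \<bar>X \<omega>\<bar> \<partial>Q) \<le> ennreal C * (B + 1)"
    by (rule SUP_least)
  also have "\<dots> < \<infinity>"
    using \<open>B < \<infinity>\<close> by (simp add: ennreal_mult_less_top)
  finally have "(SUP Q\<in>Qs. \<integral>\<^sup>+ \<omega>. ennreal \<bar>X \<omega>\<bar> \<partial>Q) < \<infinity>" .
  then show ?thesis
    using X by (simp add: L1Q_def)
qed

lemma calX_subset_L1Q:
  assumes "Z \<in> L1Q M Qs" shows "calX M Z \<subseteq> L1Q M Qs"
proof
  fix X assume "X \<in> calX M Z"
  then obtain C where "C > 0" "X \<in> borel_measurable M" and bound: "AE \<omega> in M. \<bar>X \<omega>\<bar> \<le> C * (Z \<omega> + 1)"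
    by (auto simp: calX_def)
  have "C * (Z \<omega> + 1) \<le> C * (\<bar>Z \<omega>\<bar> + 1)" for \<omega>
    using \<open>C > 0\<close> by (intro mult_left_mono) auto
  then have "AE \<omega> in M. \<bar>X \<omega>\<bar> \<le> C * (\<bar>Z \<omega>\<bar> + 1)"
    using bound by (auto elim!: eventually_mono dest: order_trans)
  with \<open>C > 0\<close> \<open>X \<in> borel_measurable M\<close> assms show "X \<in> L1Q M Qs"
    by (intro L1Q_dominated[of X Z C]) simp_all
qed

lemma L1Q_integrable:
  assumes X: "X \<in> L1Q M Qs" and Q: "Q \<in> Qs" shows "integrable Q X"
proof (rule integrableI_bounded)
  show "X \<in> borel_measurable Q"
    using X measurable_family[OF _ Q] by (auto simp: L1Q_def)
  have "(SUP Q\<in>Qs. \<integral>\<^sup>+ \<omega>. ennreal \<bar>X \<omega>\<bar> \<partial>Q) < \<infinity>"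
    using X by (simp add: L1Q_def)
  then show "(\<integral>\<^sup>+ \<omega>. ennreal (norm (X \<omega>)) \<partial>Q) < \<infinity>"
    using SUP_upper[OF Q, of "\<lambda>Q. \<integral>\<^sup>+ \<omega>. ennreal \<bar>X \<omega>\<bar> \<partial>Q"] by simp
qed

lemma integral_le_rhoQ:
  assumes X: "X \<in> L1Q M Qs" and Q: "Q \<in> Qs"
  shows "integral\<^sup>L Q X \<le> rhoQ Qs X"
proof -
  let ?B = "SUP Q\<in>Qs. \<integral>\<^sup>+ \<omega>. ennreal \<bar>X \<omega>\<bar> \<partial>Q"
  have "integral\<^sup>L Q' X \<le> enn2real ?B" if Q': "Q' \<in> Qs" for Q'
  proof -
    have meas: "X \<in> borel_measurable Q'"
      using X measurable_family[OF _ Q'] by (auto simp: L1Q_def)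
    have "integral\<^sup>L Q' X \<le> (\<integral>\<omega>. \<bar>X \<omega>\<bar> \<partial>Q')"
      using L1Q_integrable[OF X Q'] by (intro integral_mono) auto
    also have "\<dots> = enn2real (\<integral>\<^sup>+ \<omega>. ennreal \<bar>X \<omega>\<bar> \<partial>Q')"
      using meas by (intro integral_eq_nn_integral) auto
    also have "\<dots> \<le> enn2real ?B"
      using SUP_upper[OF Q', of "\<lambda>Q. \<integral>\<^sup>+ \<omega>. ennreal \<bar>X \<omega>\<bar> \<partial>Q"] X
      by (intro enn2real_mono) (simp_all add: L1Q_def)
    finally show ?thesis .
  qed
  then have "bdd_above ((\<lambda>Q. integral\<^sup>L Q X) ` Qs)"
    by (rule bdd_aboveI2)
  then show ?thesis
    unfolding rhoQ_def using Q by (rule cSUP_upper[rotated])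
qed

lemma rhoQ_le: "(\<And>Q. Q \<in> Qs \<Longrightarrow> integral\<^sup>L Q X \<le> c) \<Longrightarrow> rhoQ Qs X \<le> c"
  unfolding rhoQ_def using nonempty by (rule cSUP_least)

lemma rhoQ_nonneg_AE:
  assumes "X \<in> L1Q M Qs" "AE \<omega> in M. 0 \<le> X \<omega>"
  shows "0 \<le> rhoQ Qs X"
proof -
  obtain Q where Q: "Q \<in> Qs" using nonempty by blast
  have "0 \<le> integral\<^sup>L Q X"
    using AE_family[OF assms(2) Q] by (rule integral_nonneg_AE)
  also have "\<dots> \<le> rhoQ Qs X"
    using assms(1) Q by (rule integral_le_rhoQ)
  finally show ?thesis .
qed

lemma rhoQ_mono_AE:
  assumes "X \<in> L1Q M Qs" "X' \<in> L1Q M Qs" "AE \<omega> in M. X \<omega> \<le> X' \<omega>"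
  shows "rhoQ Qs X \<le> rhoQ Qs X'"
proof (rule rhoQ_le)
  fix Q assume Q: "Q \<in> Qs"
  have "integral\<^sup>L Q X \<le> integral\<^sup>L Q X'"
    using assms Q by (intro integral_mono_AE L1Q_integrable AE_family[OF assms(3)])
  also have "\<dots> \<le> rhoQ Qs X'"
    using assms(2) Q by (rule integral_le_rhoQ)
  finally show "integral\<^sup>L Q X \<le> rhoQ Qs X'" .
qed

lemma rhoQ_le_split:
  assumes X: "X \<in> L1Q M Qs" and W: "W \<in> L1Q M Qs" and B: "B \<in> sets M"
    and "0 \<le> c" "0 \<le> d" and small: "\<And>Q. Q \<in> Qs \<Longrightarrow> measure Q B \<le> \<eta>"
    and bound: "AE \<omega> in M. X \<omega> \<le> \<epsilon> + c * indicator B \<omega> + d * W \<omega>"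
  shows "rhoQ Qs X \<le> \<epsilon> + c * \<eta> + d * rhoQ Qs W"
proof (rule rhoQ_le)
  fix Q assume Q: "Q \<in> Qs"
  interpret Q: prob_space Q using prob_space[OF Q] .
  have B_Q: "B \<in> sets Q" using B sets_eq[OF Q] by simp
  have ind: "integrable Q (indicator B :: 'a \<Rightarrow> real)"
    using B_Q by (intro integrable_real_indicator) (simp_all add: Q.emeasure_finite less_top[symmetric])
  have "integral\<^sup>L Q X \<le> (\<integral>\<omega>. \<epsilon> + c * indicator B \<omega> + d * W \<omega> \<partial>Q)"
    using ind L1Q_integrable[OF W Q]
    by (intro integral_mono_AE L1Q_integrable[OF X Q] AE_family[OF bound Q]) simp
  also have "\<dots> = \<epsilon> + c * measure Q B + d * integral\<^sup>L Q W"
    using ind L1Q_integrable[OF W Q] B_Q by (simp add: Q.prob_space)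
  also have "\<dots> \<le> \<epsilon> + c * \<eta> + d * rhoQ Qs W"
    using small[OF Q] integral_le_rhoQ[OF W Q] \<open>0 \<le> c\<close> \<open>0 \<le> d\<close>
    by (intro add_mono mult_left_mono) auto
  finally show "integral\<^sup>L Q X \<le> \<epsilon> + c * \<eta> + d * rhoQ Qs W" .
qed

lemma L1Q_tail:
  assumes "Z \<in> L1Q M Qs"
  shows "(\<lambda>\<omega>. Z \<omega> * indicator {\<omega>. a < Z \<omega>} \<omega>) \<in> L1Q M Qs"
proof (rule L1Q_dominated[OF _ assms, of _ 1])
  have "Z \<in> borel_measurable M"
    using assms by (simp add: L1Q_def)
  then show "(\<lambda>\<omega>. Z \<omega> * indicator {\<omega>. a < Z \<omega>} \<omega>) \<in> borel_measurable M"
    by measurable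
qed (auto simp: indicator_def)

lemma exceedances_uniformly_small:
  fixes X :: "nat \<Rightarrow> 'a \<Rightarrow> real"
  assumes rel_compact: "relatively_compact_in (linfty Qs) {muQ Qs A | A. A \<in> sets M}"
    and X: "\<And>n. X n \<in> borel_measurable M" and lim: "AE \<omega> in M. (\<lambda>n. X n \<omega>) \<longlonglongrightarrow> 0"
    and "0 < \<epsilon>" "0 < \<eta>"
  shows "\<exists>n0. \<forall>n\<ge>n0. \<forall>Q\<in>Qs. measure Q (\<Union>m\<in>{n..}. {\<omega>\<in>space M. \<epsilon> < X m \<omega>}) \<le> \<eta>"
proof -
  define B where "B n = (\<Union>m\<in>{n..}. {\<omega>\<in>space M. \<epsilon> < X m \<omega>})" for n
  have B_sets: "B n \<in> sets M" for n
    unfolding B_def using X by (intro sets.countable_UN'') measurable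
  have "decseq B"
    unfolding B_def by (intro decseq_SucI SUP_subset_mono) auto
  moreover have "(\<Inter>n. B n) \<in> null_sets M"
    unfolding B_def using X lim \<open>0 < \<epsilon>\<close> by (rule limsup_exceedances_null)
  ultimately obtain n0 where n0: "\<forall>Q\<in>Qs. measure Q (B n0) < \<eta>"
    using measure_decseq_uniformly_small[OF rel_compact _ _ _ \<open>0 < \<eta>\<close>] B_sets by blast
  have "measure Q (B n) \<le> \<eta>" if "n0 \<le> n" "Q \<in> Qs" for n Q
  proof -
    interpret Q: prob_space Q using prob_space[OF \<open>Q \<in> Qs\<close>] .
    have "measure Q (B n) \<le> measure Q (B n0)"
      using B_sets sets_eq[OF \<open>Q \<in> Qs\<close>] \<open>decseq B\<close> \<open>n0 \<le> n\<close>
      by (intro Q.finite_measure_mono) (auto simp: decseq_def)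
    with n0 \<open>Q \<in> Qs\<close> show ?thesis by fastforce
  qed
  then show ?thesis
    unfolding B_def by blast
qed

lemma rhoQ_eventually_le:
  assumes Z: "Z \<in> L1Q M Qs"
    and rel_compact: "relatively_compact_in (linfty Qs) {muQ Qs A | A. A \<in> sets M}"
    and UI: "((\<lambda>a. rhoQ Qs (\<lambda>\<omega>. Z \<omega> * indicator {\<omega>. Z \<omega> > a} \<omega>)) \<longlongrightarrow> 0) at_top"
    and X: "\<And>n. X n \<in> calX M Z"
    and lim: "AE \<omega> in M. decseq (\<lambda>n. X n \<omega>) \<and> (\<lambda>n. X n \<omega>) \<longlonglongrightarrow> 0"
    and "0 < e"
  shows "\<exists>n0. \<forall>n\<ge>n0. rhoQ Qs (X n) \<le> e"
proof -
  define W where "W a = (\<lambda>\<omega>. Z \<omega> * indicator {\<omega>. Z \<omega> > a} \<omega>)" for a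
  obtain C where "0 < C" and bound: "AE \<omega> in M. \<bar>X 0 \<omega>\<bar> \<le> C * (Z \<omega> + 1)"
    using X[of 0] by (auto simp: calX_def)
  have "\<forall>\<^sub>F a in at_top. rhoQ Qs (W a) < e / (6 * C)"
    using order_tendstoD(2)[OF UI, of "e / (6 * C)"] \<open>0 < e\<close> \<open>0 < C\<close> by (simp add: W_def)
  moreover have "\<forall>\<^sub>F a in at_top. 1 \<le> (a::real)"
    by (rule eventually_ge_at_top)
  ultimately have "\<forall>\<^sub>F a in at_top. rhoQ Qs (W a) < e / (6 * C) \<and> 1 \<le> a"
    by (rule eventually_conj)
  then obtain a where a: "rhoQ Qs (W a) < e / (6 * C)" "1 \<le> a"
    unfolding eventually_at_top_linorder by blast
  define \<delta> where "\<delta> = C * (a + 1)"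
  define B where "B n = (\<Union>m\<in>{n..}. {\<omega>\<in>space M. e / 3 < X m \<omega>})" for n
  have X_meas: "\<And>n. X n \<in> borel_measurable M"
    using X by (simp add: calX_def)
  have lim0: "AE \<omega> in M. (\<lambda>n. X n \<omega>) \<longlonglongrightarrow> 0"
    using lim by (rule eventually_mono) blast
  have "0 < \<delta>"
    using \<open>0 < C\<close> a(2) by (simp add: \<delta>_def)
  then have "0 < e / 3" "0 < e / (3 * \<delta>)"
    using \<open>0 < e\<close> by simp_all
  then obtain n0 where n0: "\<forall>n\<ge>n0. \<forall>Q\<in>Qs. measure Q (B n) \<le> e / (3 * \<delta>)"
    unfolding B_def using exceedances_uniformly_small[OF rel_compact, where X=X, OF X_meas lim0] by blast
  have "rhoQ Qs (X n) \<le> e" if "n0 \<le> n" for n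
  proof -
    have "rhoQ Qs (X n) \<le> e / 3 + \<delta> * (e / (3 * \<delta>)) + 2 * C * rhoQ Qs (W a)"
    proof (rule rhoQ_le_split)
      show "X n \<in> L1Q M Qs" "W a \<in> L1Q M Qs"
        using calX_subset_L1Q[OF Z] X L1Q_tail[OF Z] by (auto simp: W_def)
      show "B n \<in> sets M"
        unfolding B_def using X_meas by (intro sets.countable_UN'') measurable
      show "AE \<omega> in M. X n \<omega> \<le> e / 3 + \<delta> * indicator (B n) \<omega> + 2 * C * W a \<omega>"
        using AE_le_split_at_levels[OF lim bound, of a "e / 3" n] \<open>0 < C\<close> a(2) \<open>0 < e\<close>
        unfolding B_def W_def \<delta>_def by simp
    qed (use n0 \<open>n0 \<le> n\<close> \<open>0 < C\<close> \<open>0 < \<delta>\<close> in simp_all)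
    also have "\<dots> \<le> e"
      using a(1) \<open>0 < C\<close> \<open>0 < \<delta>\<close> by (simp add: field_simps)
    finally show ?thesis .
  qed
  then show ?thesis by blast
qed

lemma cont_from_above_at_0I:
  assumes Z: "Z \<in> L1Q M Qs"
    and rel_compact: "relatively_compact_in (linfty Qs) {muQ Qs A | A. A \<in> sets M}"
    and UI: "((\<lambda>a. rhoQ Qs (\<lambda>\<omega>. Z \<omega> * indicator {\<omega>. Z \<omega> > a} \<omega>)) \<longlongrightarrow> 0) at_top"
  shows "cont_from_above_at_0 M Z Qs"
  unfolding cont_from_above_at_0_def
proof (intro allI impI conjI; elim conjE)
  fix X :: "nat \<Rightarrow> 'a \<Rightarrow> real"
  assume X: "\<forall>n. X n \<in> calX M Z"
    and lim: "AE \<omega> in M. decseq (\<lambda>n. X n \<omega>) \<and> (\<lambda>n. X n \<omega>) \<longlonglongrightarrow> 0"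
  have X_L1: "X n \<in> L1Q M Qs" for n
    using X calX_subset_L1Q[OF Z] by blast
  show "decseq (\<lambda>n. rhoQ Qs (X n))"
  proof (rule decseq_SucI)
    show "rhoQ Qs (X (Suc n)) \<le> rhoQ Qs (X n)" for n
      using lim by (intro rhoQ_mono_AE X_L1) (auto elim!: eventually_mono simp: decseq_Suc_iff)
  qed
  show "(\<lambda>n. rhoQ Qs (X n)) \<longlonglongrightarrow> 0"
  proof (rule order_tendstoI)
    fix c :: real assume "c < 0"
    have "AE \<omega> in M. 0 \<le> X n \<omega>" for n
      using lim by (rule eventually_mono) (metis decseq_ge)
    then have "0 \<le> rhoQ Qs (X n)" for n
      by (rule rhoQ_nonneg_AE[OF X_L1])
    with \<open>c < 0\<close> show "\<forall>\<^sub>F n in sequentially. c < rhoQ Qs (X n)"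
      by (simp add: less_le_trans)
  next
    fix c :: real assume "0 < c"
    then obtain n0 where "\<forall>n\<ge>n0. rhoQ Qs (X n) \<le> c / 2"
      using rhoQ_eventually_le[OF Z rel_compact UI _ lim, of "c / 2"] X by auto
    with \<open>0 < c\<close> show "\<forall>\<^sub>F n in sequentially. rhoQ Qs (X n) < c"
      unfolding eventually_sequentially by force
  qed
qed

end

theorem lemma6p8:
  fixes M :: "'a measure" and Fil :: "real \<Rightarrow> 'a measure" and T :: real
    and Qs :: "'a measure set" and Y :: "real \<Rightarrow> 'a \<Rightarrow> real"
  assumes P: "prob_space M"
    and filt_sub: "\<And>t. t \<in> {0..T} \<Longrightarrow> subalgebra M (Fil t)"
    and filt_mono: "\<And>s t. 0 \<le> s \<Longrightarrow> s \<le> t \<Longrightarrow> t \<le> T \<Longrightarrow> sets (Fil s) \<subseteq> sets (Fil t)"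
    and filt_T: "sets (Fil T) = sets M"
    and Q_ne: "Qs \<noteq> {}"
    and Q_prob: "\<And>Q. Q \<in> Qs \<Longrightarrow> prob_space Q"
    and Q_sets: "\<And>Q. Q \<in> Qs \<Longrightarrow> sets Q = sets M"
    and Q_ac: "\<And>Q. Q \<in> Qs \<Longrightarrow> absolutely_continuous M Q"
    and Y_adapted: "\<And>t. t \<in> {0..T} \<Longrightarrow> Y t \<in> borel_measurable (Fil t)"
    and Y_rc: "\<And>\<omega> t. \<omega> \<in> space M \<Longrightarrow> t \<in> {0..T} \<Longrightarrow>
                  ((\<lambda>s. Y s \<omega>) \<longlongrightarrow> Y t \<omega>) (at t within {t<..T})"
    and Y_bdd: "\<And>\<omega>. \<omega> \<in> space M \<Longrightarrow> \<exists>B. \<forall>t\<in>{0..T}. \<bar>Y t \<omega>\<bar> \<le> B"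
    and Ystar_L1: "Ystar T Y \<in> L1Q M Qs"
    and rel_compact: "relatively_compact_in (linfty Qs) {muQ Qs A | A. A \<in> sets M}"
    and UI: "((\<lambda>a. rhoQ Qs (\<lambda>\<omega>. Ystar T Y \<omega> * indicator {\<omega>. Ystar T Y \<omega> > a} \<omega>))
               \<longlongrightarrow> 0) at_top"
  shows "cont_from_above_at_0 M (Ystar T Y) Qs"
proof -
  interpret abs_cont_prob_family M Qs
    unfolding abs_cont_prob_family_def using Q_ne Q_prob Q_sets Q_ac by blast
  show ?thesis
    using Ystar_L1 rel_compact UI by (rule cont_from_above_at_0I)
qed

end
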